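(* Let $n=5$, fix pairwise distinct $i,j,k\in\{1,2,3\}$, and let $\boldsymbol{D}$ satisfy conditions (i)–(x) of the scheme (with offsets chosen according to (A1)–(A8) and satisfying all separability conditions except the two exempted collisions). If receiver $\mathrm{Rx}_i$ sends the decoded message $W_{ij}$ to $\mathrm{Rx}_j$ over the receiver backhaul, so that $\mathrm{Rx}_j$ cancels $W_{ij}$ from the aligned sum $W_{ij}+W_{jk}$ and decodes $W_{jk}$, and then $\mathrm{Rx}_j$ sends $W_{jk}$ to $\mathrm{Rx}_k$, so that $\mathrm{Rx}_k$ cancels it from the aligned sum $W_{jk}+W_{ki}$ and decodes $W_{ki}$, then all $9$ messages are decoded by their intended receivers, i.e. $\frac{9}{5}$ degrees of freedom are achieved with receiver-backhaul sum-rate $\Theta_{\mathrm{R}}=2$. Moreover, with $n=5$, Cyclic Interference Alignment and Cancellation (all $9$ messages sent over the channel) cannot achieve $\frac{9}{5}$ degrees of freedom with $\Theta_{\mathrm{R}}\le 1$; hence $\Theta_{\mathrm{R}}\ge 2$ is necessary.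
   Context: Cyclic polynomial channel model of the $3$-user $X$-network. Fix $n\in\mathbb{N}$; all congruences are taken modulo $x^n-1$, so $x^a\equiv x^b$ iff $a\equiv b \pmod n$. Let $\mathcal{K}=\{1,2,3\}$. $\mathrm{Tx}_i$ holds one message $W_{ji}$ for each receiver $\mathrm{Rx}_j$, messages lying in an abelian group (binary strings of length $t$). $\mathrm{Tx}_i$ chooses offsets $p_{ji}\in\{0,\dots,n-1\}$ and transmits $u_i(x)\equiv\sum_jW_{ji}x^{p_{ji}}$. Channel matrix $\boldsymbol{D}=(d_{ji})$ of monomials $x^k$, known to all. $\mathrm{Rx}_j$ observes $r_j(x)\equiv\sum_i d_{ji}u_i(x)$; the coefficient at $x^m$ is the sum of messages arriving at offset $m$. At $\mathrm{Rx}_a$ dedicated signals are $d_{al}x^{p_{al}}$ and interfering signals are $d_{al}x^{p_{bl}}$, $b\ne a$. Separability conditions: (S1) for each $i$, $x^{p_{1i}},x^{p_{2i}},x^{p_{3i}}$ pairwise incongruent; (S2) dedicated signals at each receiver pairwise incongruent; (S3) every dedicated signal at $\mathrm{Rx}_a$ incongruent to every interfering signal at $\mathrm{Rx}_a$. A receiver decodes a message if it appears alone at some offset, possibly after subtracting messages it already knows. Degrees of freedom $=M/n$, $M$ the number of messages obtained by their intended receivers. Receiver backhaul network: interference-free links between receivers, each carrying one message-sized group element; $\Theta_{\mathrm{R}}$ is the total number of such elements exchanged. Alignment scheme for fixed pairwise distinct $i,j,k$: (A1) $d_{ii}x^{p_{ji}}\equiv d_{ij}x^{p_{kj}}\equiv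 d_{ik}x^{p_{jk}}$; (A2) $d_{ii}x^{p_{ki}}\equiv d_{ij}x^{p_{jj}}\equiv d_{ik}x^{p_{kk}}$; (A3) $d_{ji}x^{p_{ki}}\equiv d_{jj}x^{p_{kj}}\equiv d_{jk}x^{p_{ik}}$; (A4) $d_{ji}x^{p_{ii}}\equiv d_{jk}x^{p_{kk}}$; (A5) $d_{jj}x^{p_{ij}}\equiv d_{jk}x^{p_{jk}}$; (A6) $d_{ki}x^{p_{ii}}\equiv d_{kj}x^{p_{jj}}\equiv d_{kk}x^{p_{ik}}$; (A7) $d_{kj}x^{p_{ij}}\equiv d_{ki}x^{p_{ji}}$; (A8) $d_{ki}x^{p_{ki}}\equiv d_{kk}x^{p_{jk}}$. (A5) and (A8) are the two exempted collisions (dedicated $W_{jk}$ with interfering $W_{ij}$ at $\mathrm{Rx}_j$; dedicated $W_{ki}$ with interfering $W_{jk}$ at $\mathrm{Rx}_k$). Conditions on $\boldsymbol{D}$: (i) $d_{ij}d_{ki}d_{jk}\equiv d_{ji}d_{ik}d_{kj}$; (ii) $d_{ii}d_{jk}d_{kj}\equiv d_{jj}d_{ik}d_{ki}\equiv d_{kk}d_{ij}d_{ji}$; (iii) $d_{ii}d_{kk}\not\equiv d_{ik}d_{ki}$; (iv) $d_{ii}d_{jj}\not\equiv d_{ij}d_{ji}$; (v) $d_{ii}d_{jk}\not\equiv d_{ik}d_{ji}$; (vi) $d_{ij}d_{jk}\not\equiv d_{ik}d_{jj}$; (vii) $d_{kk}d_{ji}\not\equiv d_{ki}d_{jk}$;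 (viii) $d_{kk}d_{jj}\not\equiv d_{kj}d_{jk}$; (ix) $d_{ii}d_{jj}d_{kk}\not\equiv d_{ij}d_{jk}d_{ki}\equiv d_{ji}d_{kj}d_{ik}$; (x) $d_{kk}d_{ii}d_{jj}d_{kk}\not\equiv d_{jk}d_{kj}d_{ik}d_{ki}$, $d_{ii}d_{ii}d_{jj}d_{kk}\not\equiv d_{ij}d_{ji}d_{ik}d_{ki}$, $d_{jj}d_{ii}d_{jj}d_{kk}\not\equiv d_{ij}d_{ji}d_{jk}d_{kj}$. Under (i)–(x), offsets satisfying (A1)–(A8) and all separability conditions except the two exempted collisions exist. *)

theory Defs
  imports Complex_Main "HOL-Number_Theory.Cong"
begin

(* Cyclic polynomial model of the 3-user X-network, everything modulo x^n - 1.
   A monomial x^e is represented by its exponent e; x^a == x^b  iff  [a = b] (mod n).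
   d r t  : exponent of the channel coefficient d_{rt}  (receiver r, transmitter t)
   p r t  : offset p_{rt} used by Tx_t for its message W_{rt} intended for Rx_r
   A message W_{rt} is represented by the pair (r, t). *)

definition K3 :: "nat set" where
  "K3 = {1, 2, 3}"

definition Msgs :: "(nat \<times> nat) set" where
  "Msgs = K3 \<times> K3"

definition arrival :: "nat \<Rightarrow> (nat \<Rightarrow> nat \<Rightarrow> nat) \<Rightarrow> (nat \<Rightarrow> nat \<Rightarrow> nat) \<Rightarrow> nat \<Rightarrow> nat \<times> nat \<Rightarrow> nat" where
  "arrival n d p a w = (d a (snd w) + p (fst w) (snd w)) mod n"

text \<open>Decoding at Rx_a starting from a set S of already known messages: a message is decoded
  if it appears alone at its offset after subtracting known (or already decoded) messages.\<close>
inductive decodes :: "nat \<Rightarrow> (nat \<Rightarrow> nat \<Rightarrow> nat) \<Rightarrow> (nat \<Rightarrow> nat \<Rightarrow> nat) \<Rightarrow> nat \<Rightarrow> (nat \<times> nat) set \<Rightarrow> nat \<times> nat \<Rightarrow> bool"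
  for n d p a S where
  known: "w \<in> S \<Longrightarrow> decodes n d p a S w"
| alone: "w \<in> Msgs \<Longrightarrow>
          (\<forall>w'\<in>Msgs. w' \<noteq> w \<and> arrival n d p a w' = arrival n d p a w \<longrightarrow> decodes n d p a S w') \<Longrightarrow>
          decodes n d p a S w"

definition init_know :: "nat \<Rightarrow> (nat \<Rightarrow> nat \<Rightarrow> nat) \<Rightarrow> (nat \<Rightarrow> nat \<Rightarrow> nat) \<Rightarrow> nat \<Rightarrow> (nat \<times> nat) set" where
  "init_know n d p = (\<lambda>a. Collect (decodes n d p a {}))"

text \<open>Receiver backhaul: a list of exchanges (s, t, w): Rx_s sends the (known) message w to Rx_t,
  which then re-decodes with w as side information. Exchanges happen in order; None if invalid.\<close>
fun run_backhaul :: "nat \<Rightarrow> (nat \<Rightarrow> nat \<Rightarrow> nat) \<Rightarrow> (nat \<Rightarrow> nat \<Rightarrow> nat) \<Rightarrow> (nat \<Rightarrow> (nat \<times> nat) set)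
    \<Rightarrow> (nat \<times> nat \<times> (nat \<times> nat)) list \<Rightarrow> (nat \<Rightarrow> (nat \<times> nat) set) option" where
  "run_backhaul n d p kn [] = Some kn"
| "run_backhaul n d p kn ((s, t, w) # es) =
     (if s \<in> K3 \<and> t \<in> K3 \<and> s \<noteq> t \<and> w \<in> kn s
      then run_backhaul n d p (kn(t := Collect (decodes n d p t (kn t \<union> {w})))) es
      else None)"

text \<open>Total number of group elements exchanged over the receiver backhaul.\<close>
definition theta_R :: "(nat \<times> nat \<times> (nat \<times> nat)) list \<Rightarrow> nat" where
  "theta_R es = length es"

definition num_decoded :: "(nat \<Rightarrow> (nat \<times> nat) set) \<Rightarrow> nat" where
  "num_decoded kn = card {w \<in> Msgs. w \<in> kn (fst w)}"

definition dof :: "nat \<Rightarrow> (nat \<Rightarrow> (nat \<times> nat) set) \<Rightarrow> real" where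
  "dof n kn = real (num_decoded kn) / real n"

definition valid_offsets :: "nat \<Rightarrow> (nat \<Rightarrow> nat \<Rightarrow> nat) \<Rightarrow> bool" where
  "valid_offsets n p \<longleftrightarrow> (\<forall>r\<in>K3. \<forall>t\<in>K3. p r t < n)"

definition D_conditions :: "nat \<Rightarrow> (nat \<Rightarrow> nat \<Rightarrow> nat) \<Rightarrow> nat \<Rightarrow> nat \<Rightarrow> nat \<Rightarrow> bool" where
  "D_conditions n d i j k \<longleftrightarrow>
     [d i j + d k i + d j k = d j i + d i k + d k j] (mod n) \<and>
     [d i i + d j k + d k j = d j j + d i k + d k i] (mod n) \<and>
     [d j j + d i k + d k i = d k k + d i j + d j i] (mod n) \<and>
     \<not> [d i i + d k k = d i k + d k i] (mod n) \<and>
     \<not> [d i i + d j j = d i j + d j i] (mod n) \<and>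
     \<not> [d i i + d j k = d i k + d j i] (mod n) \<and>
     \<not> [d i j + d j k = d i k + d j j] (mod n) \<and>
     \<not> [d k k + d j i = d k i + d j k] (mod n) \<and>
     \<not> [d k k + d j j = d k j + d j k] (mod n) \<and>
     \<not> [d i i + d j j + d k k = d i j + d j k + d k i] (mod n) \<and>
     [d i j + d j k + d k i = d j i + d k j + d i k] (mod n) \<and>
     \<not> [d k k + d i i + d j j + d k k = d j k + d k j + d i k + d k i] (mod n) \<and>
     \<not> [d i i + d i i + d j j + d k k = d i j + d j i + d i k + d k i] (mod n) \<and>
     \<not> [d j j + d i i + d j j + d k k = d i j + d j i + d j k + d k j] (mod n)"

definition alignment :: "nat \<Rightarrow> (nat \<Rightarrow> nat \<Rightarrow> nat) \<Rightarrow> (nat \<Rightarrow> nat \<Rightarrow> nat) \<Rightarrow> nat \<Rightarrow> nat \<Rightarrow> nat \<Rightarrow> bool" where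
  "alignment n d p i j k \<longleftrightarrow>
     [d i i + p j i = d i j + p k j] (mod n) \<and> [d i j + p k j = d i k + p j k] (mod n) \<and>
     [d i i + p k i = d i j + p j j] (mod n) \<and> [d i j + p j j = d i k + p k k] (mod n) \<and>
     [d j i + p k i = d j j + p k j] (mod n) \<and> [d j j + p k j = d j k + p i k] (mod n) \<and>
     [d j i + p i i = d j k + p k k] (mod n) \<and>
     [d j j + p i j = d j k + p j k] (mod n) \<and>
     [d k i + p i i = d k j + p j j] (mod n) \<and> [d k j + p j j = d k k + p i k] (mod n) \<and>
     [d k j + p i j = d k i + p j i] (mod n) \<and>
     [d k i + p k i = d k k + p j k] (mod n)"

text \<open>Exempted collisions: dedicated W_{jk} with interfering W_{ij} at Rx_j, and
  dedicated W_{ki} with interfering W_{jk} at Rx_k.  exempt i j k a l b l' refers to the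
  dedicated signal d_{al} x^{p_{al}} and the interfering signal d_{al'} x^{p_{bl'}} at Rx_a.\<close>
definition exempt :: "nat \<Rightarrow> nat \<Rightarrow> nat \<Rightarrow> nat \<Rightarrow> nat \<Rightarrow> nat \<Rightarrow> nat \<Rightarrow> bool" where
  "exempt i j k a l b l' \<longleftrightarrow>
     (a = j \<and> l = k \<and> b = i \<and> l' = j) \<or> (a = k \<and> l = i \<and> b = j \<and> l' = k)"

definition separable_except :: "nat \<Rightarrow> (nat \<Rightarrow> nat \<Rightarrow> nat) \<Rightarrow> (nat \<Rightarrow> nat \<Rightarrow> nat) \<Rightarrow> nat \<Rightarrow> nat \<Rightarrow> nat \<Rightarrow> bool" where
  "separable_except n d p i j k \<longleftrightarrow>
     (\<forall>t\<in>K3. \<forall>a\<in>K3. \<forall>b\<in>K3. a \<noteq> b \<longrightarrow> \<not> [p a t = p b t] (mod n)) \<and>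
     (\<forall>a\<in>K3. \<forall>l\<in>K3. \<forall>l'\<in>K3. l \<noteq> l' \<longrightarrow> \<not> [d a l + p a l = d a l' + p a l'] (mod n)) \<and>
     (\<forall>a\<in>K3. \<forall>l\<in>K3. \<forall>b\<in>K3. \<forall>l'\<in>K3. b \<noteq> a \<longrightarrow> \<not> exempt i j k a l b l' \<longrightarrow>
        \<not> [d a l + p a l = d a l' + p b l'] (mod n))"

definition protocol :: "nat \<Rightarrow> nat \<Rightarrow> nat \<Rightarrow> (nat \<times> nat \<times> (nat \<times> nat)) list" where
  "protocol i j k = [(i, j, (i, j)), (j, k, (j, k))]"

end

theory Submission
  imports Defs "HOL-Library.Numeral_Type"
begin

text \<open>
  For \<open>n = 5\<close>, a receiver that decodes all three of its messages without side information has
  its three dedicated signals at three offsets of their own, so its six interfering signals share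
  the two remaining offsets. Two receivers observe the same transmitted offsets, shifted per
  transmitter \<open>l\<close> by \<open>d\<^sub>a\<^sub>2\<^sub>l - d\<^sub>a\<^sub>1\<^sub>l\<close>; forcing the interference into two offsets at both receivers
  makes two messages of one receiver align at the other, which pins the offsets down to an
  arithmetic progression in \<open>\<int>/5\<close> that cannot satisfy the remaining constraints. One backhaul
  message changes the knowledge of a single receiver, so \<open>\<Theta>\<^sub>R \<le> 1\<close> leaves two receivers on their
  own. Conversely, under separability every dedicated signal is alone at its receiver except for
  the two exempted collisions, which the backhaul messages \<open>W\<^sub>i\<^sub>j\<close> and then \<open>W\<^sub>j\<^sub>k\<close> resolve.
\<close>

lemma Msgs_iff [simp]: "(b, l) \<in> Msgs \<longleftrightarrow> b \<in> K3 \<and> l \<in> K3"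
  by (simp add: Msgs_def)

lemma K3_third:
  assumes "a \<in> K3" "b \<in> K3" "a \<noteq> b"
  obtains c where "c \<in> K3" "c \<noteq> a" "c \<noteq> b"
  using assms unfolding K3_def by (simp; elim disjE; simp)

lemma K3_cases:
  assumes "i \<in> K3" "j \<in> K3" "k \<in> K3" "i \<noteq> j" "j \<noteq> k" "i \<noteq> k" "r \<in> K3"
  shows "r = i \<or> r = j \<or> r = k"
  using assms unfolding K3_def by (simp; elim disjE; simp)

lemma UNIV_5: "(UNIV :: 5 set) = {0, 1, 2, 3, 4}"
  by (rule card_subset_eq[symmetric]) simp_all

lemma eq_either_if_distinct_5:
  fixes x1 x2 x3 y z w :: 5
  assumes "distinct [x1, x2, x3, y, z]" and "w \<notin> {x1, x2, x3}"
  shows "w = y \<or> w = z"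
proof -
  have "card {x1, x2, x3, y, z} = CARD(5)"
    using distinct_card[OF assms(1)] by simp
  then have "{x1, x2, x3, y, z} = UNIV"
    by (simp add: card_eq_UNIV_imp_eq_UNIV)
  then show ?thesis using assms(2) by auto
qed

lemma progression_5_contradiction:
  fixes q c a b f :: 5
  assumes "c \<noteq> 0" and "b \<noteq> a"
    and a: "a \<notin> {q - c, q, q + c}" and b: "b \<notin> {q - c, q, q + c}"
    and af: "a + f \<in> {q - c, q}" and bf: "b + f \<in> {q - c, q}"
    and "q + f \<noteq> a" and "q + f \<noteq> a - c"
  shows False
proof -
  have c: "c \<in> {1, 2, 3, 4}" using UNIV_5 \<open>c \<noteq> 0\<close> by auto
  then have "distinct [q - c, q, q + c, q + 2 * c, q - 2 * c]"
    by (auto simp: algebra_simps)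
  then have "a = q + 2 * c \<and> b = q - 2 * c \<or> a = q - 2 * c \<and> b = q + 2 * c"
    using eq_either_if_distinct_5 a b \<open>b \<noteq> a\<close> by metis
  then show False
  proof (elim disjE conjE)
    assume "a = q + 2 * c" "b = q - 2 * c"
    then show False using af bf \<open>q + f \<noteq> a\<close> c by (auto simp: algebra_simps)
  next
    assume "a = q - 2 * c" "b = q + 2 * c"
    then show False using af bf \<open>q + f \<noteq> a - c\<close> c by (auto simp: algebra_simps)
  qed
qed

lemma interference_in_complement_5:
  fixes D X Y :: "nat \<Rightarrow> 5"
  assumes "inj_on D K3" and "\<forall>l\<in>K3. \<forall>m\<in>K3. D l \<noteq> X m \<and> D l \<noteq> Y m"
    and "X l \<noteq> Y l" and "l \<in> K3" and "m \<in> K3"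
  shows "X m \<in> {X l, Y l}" and "Y m \<in> {X l, Y l}"
proof -
  have K: "1 \<in> K3" "2 \<in> K3" "3 \<in> K3" by (simp_all add: K3_def)
  have "D 1 \<noteq> D 2" "D 1 \<noteq> D 3" "D 2 \<noteq> D 3"
    using assms(1) K by (auto dest: inj_onD)
  then have "distinct [D 1, D 2, D 3, X l, Y l]"
    using assms(2-4) K by auto
  moreover have "X m \<notin> {D 1, D 2, D 3}" and "Y m \<notin> {D 1, D 2, D 3}"
    using assms(2,5) K by fastforce+
  ultimately show "X m \<in> {X l, Y l}" and "Y m \<in> {X l, Y l}"
    using eq_either_if_distinct_5 by blast+
qed

text \<open>
  Here \<open>B l\<close>, \<open>A l\<close>, \<open>Q l\<close> are the offsets at a first receiver of the messages that transmitter
  \<open>l\<close> sends to that receiver, to a second one and to the third one; adding \<open>E l\<close> moves the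
  signals of transmitter \<open>l\<close> to the second receiver.
\<close>

lemma two_receivers_alone_5_contradiction:
  fixes B A Q E :: "nat \<Rightarrow> 5"
  assumes B: "inj_on B K3" "\<forall>l\<in>K3. \<forall>m\<in>K3. B l \<noteq> A m \<and> B l \<noteq> Q m"
    and AE: "inj_on (\<lambda>l. A l + E l) K3"
      "\<forall>l\<in>K3. \<forall>m\<in>K3. A l + E l \<noteq> B m + E m \<and> A l + E l \<noteq> Q m + E m"
  shows False
proof -
  have A_ne_Q: "A l \<noteq> Q l" if "l \<in> K3" for l
    using AE(2) that by fastforce
  have BE_ne_QE: "B l + E l \<noteq> Q l + E l" if "l \<in> K3" for l
    using B(2) that by auto
  have at1: "A m \<in> {A l, Q l}" "Q m \<in> {A l, Q l}" if "l \<in> K3" "m \<in> K3" for l m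
    using interference_in_complement_5[OF B A_ne_Q[OF that(1)] that] .
  have at2: "B m + E m \<in> {B l + E l, Q l + E l}" "Q m + E m \<in> {B l + E l, Q l + E l}"
    if "l \<in> K3" "m \<in> K3" for l m
    using interference_in_complement_5[where X = "\<lambda>l. B l + E l" and Y = "\<lambda>l. Q l + E l",
        OF AE BE_ne_QE[OF that(1)] that] .
  have aligned: "Q l = Q m \<and> E l \<noteq> E m \<and> B l + E l = Q m + E m \<and> B m + E m = Q l + E l"
    if lm: "l \<in> K3" "m \<in> K3" "l \<noteq> m" and "A l = A m" for l m
  proof -
    have "E l \<noteq> E m" using inj_onD[OF AE(1), of l m] lm \<open>A l = A m\<close> by auto
    moreover have "Q l = Q m" using at1(2)[OF lm(1,2)] A_ne_Q[OF lm(2)] \<open>A l = A m\<close> by auto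
    moreover have "B l + E l = Q m + E m"
      using at2(2)[OF lm(1,2)] \<open>Q l = Q m\<close> \<open>E l \<noteq> E m\<close> by auto
    moreover have "B m + E m = Q l + E l"
      using at2(1)[OF lm(1,2)] \<open>B l + E l = Q m + E m\<close> BE_ne_QE[OF lm(2)] by auto
    ultimately show ?thesis by blast
  qed
  have no_aligned_pair: False
    if lmn: "l \<in> K3" "m \<in> K3" "n \<in> K3" "distinct [l, m, n]" and "A l = A m" for l m n
  proof (cases "A n = A l")
    case True
    \<comment> \<open>then \<open>Q m + E m\<close> and \<open>Q n + E n\<close> both equal \<open>B l + E l\<close>, so \<open>E m = E n\<close>\<close>
    then show False
      using aligned[of l m] aligned[of l n] aligned[of m n] lmn \<open>A l = A m\<close> by auto
  next
    case False
    then have An: "A n = Q l" using at1(1)[OF lmn(1,3)] by auto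
    have Qn: "Q n = A l" using at1(2)[OF lmn(1,3)] A_ne_Q[OF lmn(3)] An by auto
    define c where "c = E l - E m"
    have "c \<noteq> 0" and Bl: "B l = Q l - c" and Bm: "B m = Q l + c"
      using aligned[OF lmn(1,2) _ \<open>A l = A m\<close>] lmn(4)
      by (auto simp: c_def algebra_simps)
    show False
    proof (rule progression_5_contradiction[of c "B n" "A l" "Q l" "E n - E l"])
      show "c \<noteq> 0" by fact
      show "B n \<noteq> A l" using B(2) lmn by blast
      show "A l \<notin> {Q l - c, Q l, Q l + c}"
        unfolding Bl[symmetric] Bm[symmetric] using B(2) A_ne_Q lmn by fastforce
      show "B n \<notin> {Q l - c, Q l, Q l + c}"
        unfolding Bl[symmetric] Bm[symmetric] using B lmn by (auto dest: inj_onD)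
      show "A l + (E n - E l) \<in> {Q l - c, Q l}"
        using at2(2)[OF lmn(1,3)] Qn Bl by (auto simp: algebra_simps)
      show "B n + (E n - E l) \<in> {Q l - c, Q l}"
        using at2(1)[OF lmn(1,3)] Bl by (auto simp: algebra_simps)
      show "Q l + (E n - E l) \<noteq> A l"
        using inj_onD[OF AE(1), of n l] lmn An by (auto simp: algebra_simps)
      show "Q l + (E n - E l) \<noteq> A l - c"
        using inj_onD[OF AE(1), of n m] lmn An \<open>A l = A m\<close> by (auto simp: c_def algebra_simps)
    qed
  qed
  have K: "1 \<in> K3" "2 \<in> K3" "3 \<in> K3" by (simp_all add: K3_def)
  have "A 2 \<in> {A 1, Q 1}" and "A 3 \<in> {A 1, Q 1}"
    using at1(1) K by blast+
  then show False
    using no_aligned_pair[of 1 2 3] no_aligned_pair[of 1 3 2] no_aligned_pair[of 2 3 1] K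
    by auto
qed

definition dedicated_alone :: "nat \<Rightarrow> (nat \<Rightarrow> nat \<Rightarrow> nat) \<Rightarrow> (nat \<Rightarrow> nat \<Rightarrow> nat) \<Rightarrow> nat \<Rightarrow> bool" where
  "dedicated_alone n d p a \<longleftrightarrow>
     (\<forall>l\<in>K3. \<forall>w\<in>Msgs. w \<noteq> (a, l) \<longrightarrow> arrival n d p a w \<noteq> arrival n d p a (a, l))"

lemma dedicated_alone_5_iff:
  "dedicated_alone 5 d p a \<longleftrightarrow>
     (\<forall>l\<in>K3. \<forall>b\<in>K3. \<forall>m\<in>K3. (b, m) \<noteq> (a, l) \<longrightarrow>
        (of_nat (d a m + p b m) :: 5) \<noteq> of_nat (d a l + p a l))"
proof -
  have mod_iff: "(of_nat x :: 5) = of_nat y \<longleftrightarrow> x mod 5 = y mod 5" for x y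
    by (simp add: of_nat_eq_iff_cong_CHAR cong_def del: of_nat_add)
  show ?thesis
    unfolding dedicated_alone_def arrival_def mod_iff by (auto simp: Msgs_def)
qed

lemma not_two_receivers_dedicated_alone_5:
  assumes a: "a1 \<in> K3" "a2 \<in> K3" "a1 \<noteq> a2"
    and alone1: "dedicated_alone 5 d p a1" and alone2: "dedicated_alone 5 d p a2"
  shows False
proof -
  obtain a3 where a3: "a3 \<in> K3" "a3 \<noteq> a1" "a3 \<noteq> a2" using K3_third[OF a] .
  define X where "X b l = (of_nat (d a1 l + p b l) :: 5)" for b l
  define E where "E l = (of_nat (d a2 l) - of_nat (d a1 l) :: 5)" for l
  have at_a2: "of_nat (d a2 l + p b l) = X b l + E l" for b l
    by (simp add: X_def E_def)
  have sep1: "X b m \<noteq> X a1 l" if "l \<in> K3" "b \<in> K3" "m \<in> K3" "(b, m) \<noteq> (a1, l)" for b l m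
    using alone1 that unfolding dedicated_alone_5_iff X_def by blast
  have sep2: "X b m + E m \<noteq> X a2 l + E l" if "l \<in> K3" "b \<in> K3" "m \<in> K3" "(b, m) \<noteq> (a2, l)" for b l m
    using alone2 that unfolding dedicated_alone_5_iff at_a2 by blast
  show False
  proof (rule two_receivers_alone_5_contradiction[of "X a1" "X a2" "X a3" E])
    show "inj_on (X a1) K3"
      using sep1 a(1) by (auto intro: inj_onI)
    show "\<forall>l\<in>K3. \<forall>m\<in>K3. X a1 l \<noteq> X a2 m \<and> X a1 l \<noteq> X a3 m"
      using sep1 a a3 by fastforce
    show "inj_on (\<lambda>l. X a2 l + E l) K3"
      using sep2 a(2) by (auto intro: inj_onI)
    show "\<forall>l\<in>K3. \<forall>m\<in>K3. X a2 l + E l \<noteq> X a1 m + E m \<and> X a2 l + E l \<noteq> X a3 m + E m"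
      using sep2 a a3 by fastforce
  qed
qed

lemma decodes_without_side_information:
  assumes "decodes n d p a {} w"
  shows "w \<in> Msgs \<and> (\<forall>w'\<in>Msgs. w' \<noteq> w \<longrightarrow> arrival n d p a w' \<noteq> arrival n d p a w)"
  using assms
proof (induction rule: decodes.induct)
  case (known w)
  then show ?case by simp
next
  case (alone w)
  show ?case
  proof (intro conjI ballI impI notI)
    show "w \<in> Msgs" by fact
    fix w' assume "w' \<in> Msgs" "w' \<noteq> w" "arrival n d p a w' = arrival n d p a w"
    \<comment> \<open>then \<open>w'\<close> was decoded first, but \<open>w\<close> collides with it\<close>
    then show False using alone.IH alone.hyps(1) by metis
  qed
qed

lemma dedicated_alone_if_init_know:
  assumes "\<forall>l\<in>K3. (a, l) \<in> init_know n d p a"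
  shows "dedicated_alone n d p a"
  using assms decodes_without_side_information
  unfolding dedicated_alone_def init_know_def by blast

lemma run_backhaul_length_le_1:
  assumes "length es \<le> 1" and "run_backhaul n d p kn0 es = Some kn"
  obtains a1 a2 where "a1 \<in> K3" "a2 \<in> K3" "a1 \<noteq> a2" "kn a1 = kn0 a1" "kn a2 = kn0 a2"
proof -
  consider "es = []" | s t w where "es = [(s, t, w)]"
    using assms(1) by (cases es) auto
  then show ?thesis
  proof cases
    case 1
    then show ?thesis using assms(2) that[of 1 2] by (simp add: K3_def)
  next
    case 2
    then have "t \<in> K3" and "kn = kn0(t := Collect (decodes n d p t (kn0 t \<union> {w})))"
      using assms(2) by (simp_all split: if_splits)
    moreover have "\<exists>a1\<in>K3. \<exists>a2\<in>K3. a1 \<noteq> a2 \<and> a1 \<noteq> t \<and> a2 \<noteq> t"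
      using \<open>t \<in> K3\<close> unfolding K3_def by (simp; elim disjE; simp)
    ultimately show ?thesis using that by auto
  qed
qed

lemma dof_eq_iff_all_decoded:
  assumes "0 < n"
  shows "dof n kn = 9 / n \<longleftrightarrow> (\<forall>w\<in>Msgs. w \<in> kn (fst w))"
proof -
  have "finite Msgs" and "card Msgs = 9"
    by (simp_all add: Msgs_def K3_def card_cartesian_product)
  then have "num_decoded kn = 9 \<longleftrightarrow> {w \<in> Msgs. w \<in> kn (fst w)} = Msgs"
    unfolding num_decoded_def by (metis (no_types, lifting) card_subset_eq mem_Collect_eq subsetI)
  also have "\<dots> \<longleftrightarrow> (\<forall>w\<in>Msgs. w \<in> kn (fst w))" by blast
  finally show ?thesis using assms by (simp add: dof_def divide_eq_eq)
qed

theorem dof_ne_9_5_if_theta_R_le_1: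
  assumes "theta_R es \<le> 1" and "run_backhaul 5 d p (init_know 5 d p) es = Some kn"
  shows "dof 5 kn \<noteq> 9 / 5"
proof
  assume "dof 5 kn = 9 / 5"
  then have all: "\<forall>w\<in>Msgs. w \<in> kn (fst w)" using dof_eq_iff_all_decoded[of 5] by simp
  obtain a1 a2 where a: "a1 \<in> K3" "a2 \<in> K3" "a1 \<noteq> a2"
    and unchanged: "kn a1 = init_know 5 d p a1" "kn a2 = init_know 5 d p a2"
    using run_backhaul_length_le_1 assms unfolding theta_R_def by metis
  have alone: "dedicated_alone 5 d p a" if "a \<in> K3" "kn a = init_know 5 d p a" for a
  proof (rule dedicated_alone_if_init_know, intro ballI)
    fix l assume "l \<in> K3"
    then show "(a, l) \<in> init_know 5 d p a" using all that by (metis Msgs_iff fst_conv)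
  qed
  show False
    using not_two_receivers_dedicated_alone_5[OF a]
      alone[OF a(1) unchanged(1)] alone[OF a(2) unchanged(2)] by blast
qed

lemma decodes_dedicated:
  assumes sep: "separable_except n d p i j k" and a: "a \<in> K3" and l: "l \<in> K3"
    and exempt_known:
      "\<And>b l'. b \<in> K3 \<Longrightarrow> l' \<in> K3 \<Longrightarrow> b \<noteq> a \<Longrightarrow> exempt i j k a l b l' \<Longrightarrow> (b, l') \<in> S"
  shows "decodes n d p a S (a, l)"
proof (rule decodes.alone)
  show "(a, l) \<in> Msgs" using a l by simp
  show "\<forall>w\<in>Msgs. w \<noteq> (a, l) \<and> arrival n d p a w = arrival n d p a (a, l) \<longrightarrow> decodes n d p a S w"
  proof (intro ballI impI, elim conjE)
    fix w assume "w \<in> Msgs" "w \<noteq> (a, l)" "arrival n d p a w = arrival n d p a (a, l)"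
    moreover obtain b l' where w: "w = (b, l')" by (cases w)
    ultimately have bl': "b \<in> K3" "l' \<in> K3" "(b, l') \<noteq> (a, l)"
      and coll: "[d a l + p a l = d a l' + p b l'] (mod n)"
      by (auto simp: arrival_def cong_def)
    have "b \<noteq> a"
    proof
      assume "b = a"
      then have "l \<noteq> l'" using bl'(3) by simp
      then show False using sep a l bl'(2) coll \<open>b = a\<close> unfolding separable_except_def by blast
    qed
    moreover have "exempt i j k a l b l'"
      using sep a l bl'(1,2) coll \<open>b \<noteq> a\<close> unfolding separable_except_def by blast
    ultimately show "decodes n d p a S w"
      using exempt_known bl' w by (auto intro: decodes.known)
  qed
qed

lemma protocol_decodes_all:
  assumes ijk: "i \<in> K3" "j \<in> K3" "k \<in> K3" "i \<noteq> j" "j \<noteq> k" "i \<noteq> k"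
    and sep: "separable_except n d p i j k"
  shows "\<exists>kn. run_backhaul n d p (init_know n d p) (protocol i j k) = Some kn \<and>
           (\<forall>w\<in>Msgs. w \<in> kn (fst w))"
proof -
  define kn0 where "kn0 = init_know n d p"
  define kn1 where "kn1 = kn0(j := Collect (decodes n d p j (kn0 j \<union> {(i, j)})))"
  define kn2 where "kn2 = kn1(k := Collect (decodes n d p k (kn1 k \<union> {(j, k)})))"
  have at_i: "(i, l) \<in> kn0 i" if "l \<in> K3" for l
    using decodes_dedicated[OF sep ijk(1) that, of "{}"] ijk
    by (auto simp: kn0_def init_know_def exempt_def)
  have at_j: "(j, l) \<in> kn1 j" if "l \<in> K3" for l
    using decodes_dedicated[OF sep ijk(2) that, of "kn0 j \<union> {(i, j)}"] ijk
    by (auto simp: kn1_def exempt_def)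
  have at_k: "(k, l) \<in> kn2 k" if "l \<in> K3" for l
    using decodes_dedicated[OF sep ijk(3) that, of "kn1 k \<union> {(j, k)}"] ijk
    by (auto simp: kn2_def exempt_def)
  have "run_backhaul n d p kn0 (protocol i j k) = Some kn2"
    using ijk at_i[OF ijk(2)] at_j[OF ijk(3)] by (simp add: protocol_def kn2_def kn1_def)
  moreover have "w \<in> kn2 (fst w)" if "w \<in> Msgs" for w
  proof -
    obtain r l where w: "w = (r, l)" and "r \<in> K3" "l \<in> K3" using \<open>w \<in> Msgs\<close> by (cases w) auto
    then consider "r = i" | "r = j" | "r = k" using K3_cases[OF ijk] by blast
    then show ?thesis
      using at_i at_j at_k \<open>l \<in> K3\<close> ijk w by cases (simp_all add: kn2_def kn1_def)
  qed
  ultimately show ?thesis unfolding kn0_def by blast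
qed

text \<open>
  The alignment conditions (A1)--(A8) and the conditions (i)--(x) on the channel only serve to
  make separability attainable: decoding uses separability alone, and the converse holds for
  every channel and every choice of offsets.
\<close>

theorem lemma1:
  fixes d :: "nat \<Rightarrow> nat \<Rightarrow> nat" and i j k :: nat
  assumes "i \<in> K3" and "j \<in> K3" and "k \<in> K3"
    and "i \<noteq> j" and "j \<noteq> k" and "i \<noteq> k"
    and "D_conditions 5 d i j k"
  shows "(\<forall>p. valid_offsets 5 p \<and> alignment 5 d p i j k \<and> separable_except 5 d p i j k \<longrightarrow>
            (\<exists>kn. run_backhaul 5 d p (init_know 5 d p) (protocol i j k) = Some kn \<and>
                  (\<forall>w\<in>Msgs. w \<in> kn (fst w)) \<and> dof 5 kn = 9 / 5 \<and>
                  theta_R (protocol i j k) = 2))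
       \<and> (\<forall>p es kn. valid_offsets 5 p \<longrightarrow> theta_R es \<le> 1 \<longrightarrow>
            run_backhaul 5 d p (init_know 5 d p) es = Some kn \<longrightarrow> dof 5 kn \<noteq> 9 / 5)"
proof (intro conjI allI impI)
  fix p assume "valid_offsets 5 p \<and> alignment 5 d p i j k \<and> separable_except 5 d p i j k"
  then obtain kn where "run_backhaul 5 d p (init_know 5 d p) (protocol i j k) = Some kn"
    and "\<forall>w\<in>Msgs. w \<in> kn (fst w)"
    using protocol_decodes_all[OF assms(1-6)] by blast
  then show "\<exists>kn. run_backhaul 5 d p (init_know 5 d p) (protocol i j k) = Some kn \<and>
      (\<forall>w\<in>Msgs. w \<in> kn (fst w)) \<and> dof 5 kn = 9 / 5 \<and> theta_R (protocol i j k) = 2"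
    using dof_eq_iff_all_decoded[of 5] by (auto simp: theta_R_def protocol_def)
next
  fix p es kn
  assume "theta_R es \<le> 1" and "run_backhaul 5 d p (init_know 5 d p) es = Some kn"
  then show "dof 5 kn \<noteq> 9 / 5" by (rule dof_ne_9_5_if_theta_R_le_1)
qed

end
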